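(* Let $f:\mathbb{R}^n\to\mathbb{R}\cup\{\infty\}$ be a proper lower semicontinuous function with $\bar x\in\operatorname{dom} f$. Consider the assertions: (i) $\bar x$ is a strong local minimizer of $f$; (ii) $\bar x$ is a local minimizer of $f$ and $\partial f$ is strongly metrically subregular at $\bar x$ for $0$; (iii) $0\in\partial_p f(\bar x)$ and $\langle z,w\rangle>0$ for all $w\in\operatorname{dom}D(\partial f)(\bar x|0)\setminus\{0\}$ and all $z\in D(\partial f)(\bar x|0)(w)$. Then (iii) $\Rightarrow$ (ii) $\Rightarrow$ (i).
   Context: Tangent cone: $T_\Omega(\bar u)=\{v\mid \exists t_k\downarrow0,\ v_k\to v,\ \bar u+t_kv_k\in\Omega\}$. Limiting subdifferential $\partial f(\bar x)=\{v\mid (v,-1)\in N_{\operatorname{epi} f}(\bar x,f(\bar x))\}$ where $N$ is the limiting (Mordukhovich) normal cone; proximal subdifferential $\partial_p f(\bar x)=\{v\mid \liminf_{x\to\bar x}\frac{f(x)-f(\bar x)-\langle v,x-\bar x\rangle}{\|x-\bar x\|^2}>-\infty\}$. Graphical derivative: $DF(\bar x|\bar y)(w)=\{z\mid (w,z)\in T_{\operatorname{gph}F}(\bar x,\bar y)\}$, applied to $F=\partial f$; $\operatorname{dom}$ denotes the set where the map is nonempty. A set-valued map $F$ is metrically subregular at $\bar x$ for $\bar y\in F(\bar x)$ if there are $\kappa>0$ and a neighborhood $U$ of $\bar x$ with $d(x;F^{-1}(\bar y))\le\kappa\, d(\bar y;F(x))$ for all $x\in U$; it is strongly metrically subregular if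 in addition $\bar x$ is an isolated point of $F^{-1}(\bar y)$. $\bar x$ is a strong local minimizer of $f$ if there are $\kappa,\gamma>0$ with $f(x)-f(\bar x)\ge\frac\kappa2\|x-\bar x\|^2$ whenever $\|x-\bar x\|\le\gamma$. *)

theory Defs
  imports "HOL-Analysis.Analysis" "HOL-Library.Extended_Real"
begin

definition proper_fun :: "('a \<Rightarrow> ereal) \<Rightarrow> bool" where
  "proper_fun f \<longleftrightarrow> (\<forall>x. f x \<noteq> -\<infinity>) \<and> (\<exists>x. f x \<noteq> \<infinity>)"

definition lsc_fun :: "('a::topological_space \<Rightarrow> ereal) \<Rightarrow> bool" where
  "lsc_fun f \<longleftrightarrow> (\<forall>x. f x \<le> Liminf (at x) f)"

definition efdom :: "('a \<Rightarrow> ereal) \<Rightarrow> 'a set" where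
  "efdom f = {x. f x < \<infinity>}"

definition epigraph :: "('a \<Rightarrow> ereal) \<Rightarrow> ('a \<times> real) set" where
  "epigraph f = {(x, \<alpha>). f x \<le> ereal \<alpha>}"

definition frechet_normal :: "'a::real_inner set \<Rightarrow> 'a \<Rightarrow> 'a set" where
  "frechet_normal C z = {v. z \<in> C \<and>
     (\<forall>\<epsilon>>0. \<exists>\<delta>>0. \<forall>z'\<in>C. norm (z' - z) < \<delta> \<longrightarrow> inner v (z' - z) \<le> \<epsilon> * norm (z' - z))}"

definition limiting_normal :: "'a::real_inner set \<Rightarrow> 'a \<Rightarrow> 'a set" where
  "limiting_normal C z = {v. z \<in> C \<and> (\<exists>zk vk. (\<forall>k. zk k \<in> C \<and> vk k \<in> frechet_normal C (zk k))
        \<and> zk \<longlonglongrightarrow> z \<and> vk \<longlonglongrightarrow> v)}"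

definition limiting_subdiff :: "('a::real_inner \<Rightarrow> ereal) \<Rightarrow> 'a \<Rightarrow> 'a set" where
  "limiting_subdiff f x = {v. \<bar>f x\<bar> \<noteq> \<infinity> \<and>
       (v, -1) \<in> limiting_normal (epigraph f) (x, real_of_ereal (f x))}"

definition proximal_subdiff :: "('a::real_inner \<Rightarrow> ereal) \<Rightarrow> 'a \<Rightarrow> 'a set" where
  "proximal_subdiff f x = {v. \<bar>f x\<bar> \<noteq> \<infinity> \<and>
       Liminf (at x) (\<lambda>y. (f y - f x - ereal (inner v (y - x))) / ereal ((norm (y - x))\<^sup>2)) > -\<infinity>}"

definition tangent_cone :: "'a::real_normed_vector set \<Rightarrow> 'a \<Rightarrow> 'a set" where
  "tangent_cone \<Omega> u = {v. \<exists>t vk. (\<forall>k. t k > 0 \<and> u + t k *\<^sub>R vk k \<in> \<Omega>)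
        \<and> t \<longlonglongrightarrow> 0 \<and> vk \<longlonglongrightarrow> v}"

definition graph_of :: "('a \<Rightarrow> 'b set) \<Rightarrow> ('a \<times> 'b) set" where
  "graph_of F = {(x, y). y \<in> F x}"

definition graphical_derivative ::
  "('a::real_normed_vector \<Rightarrow> 'b::real_normed_vector set) \<Rightarrow> 'a \<Rightarrow> 'b \<Rightarrow> 'a \<Rightarrow> 'b set" where
  "graphical_derivative F x y w = {z. (w, z) \<in> tangent_cone (graph_of F) (x, y)}"

definition sv_dom :: "('a \<Rightarrow> 'b set) \<Rightarrow> 'a set" where
  "sv_dom G = {w. G w \<noteq> {}}"

definition set_dist :: "'a::metric_space \<Rightarrow> 'a set \<Rightarrow> ereal" where
  "set_dist y A = (if A = {} then \<infinity> else ereal (infdist y A))"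

definition metrically_subregular ::
  "('a::metric_space \<Rightarrow> 'b::metric_space set) \<Rightarrow> 'a \<Rightarrow> 'b \<Rightarrow> bool" where
  "metrically_subregular F xb yb \<longleftrightarrow> yb \<in> F xb \<and>
     (\<exists>\<kappa>>0. \<exists>U. open U \<and> xb \<in> U \<and>
        (\<forall>x\<in>U. set_dist x {u. yb \<in> F u} \<le> ereal \<kappa> * set_dist yb (F x)))"

definition strongly_metrically_subregular ::
  "('a::metric_space \<Rightarrow> 'b::metric_space set) \<Rightarrow> 'a \<Rightarrow> 'b \<Rightarrow> bool" where
  "strongly_metrically_subregular F xb yb \<longleftrightarrow> metrically_subregular F xb yb \<and>
     (\<exists>\<epsilon>>0. {u. yb \<in> F u} \<inter> ball xb \<epsilon> = {xb})"

definition local_minimizer :: "('a::metric_space \<Rightarrow> ereal) \<Rightarrow> 'a \<Rightarrow> bool" where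
  "local_minimizer f xb \<longleftrightarrow> (\<exists>\<gamma>>0. \<forall>x. dist x xb \<le> \<gamma> \<longrightarrow> f xb \<le> f x)"

definition strong_local_minimizer :: "('a::real_normed_vector \<Rightarrow> ereal) \<Rightarrow> 'a \<Rightarrow> bool" where
  "strong_local_minimizer f xb \<longleftrightarrow> (\<exists>\<kappa>>0. \<exists>\<gamma>>0. \<forall>x. norm (x - xb) \<le> \<gamma> \<longrightarrow>
       f x - f xb \<ge> ereal (\<kappa> / 2 * (norm (x - xb))\<^sup>2))"

end

theory Submission
  imports Defs
begin

(* (iii) implies (ii): the proximal subgradient 0 gives a quadratic minorant of f at xb, so
   0 is a limiting subgradient there. Positive definiteness of D(\<partial>f)(xb|0), together with
   compactness of the unit sphere, yields for every C some \<delta>, \<eta> > 0 with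
   <v, p - xb> > \<eta> |p - xb|^2 whenever v \<in> \<partial>f(p), 0 < |p - xb| < \<delta> and |v| <= C |p - xb|;
   this gives strong metric subregularity.
   If some x near xb had f x < f xb, a minimizer p of f + A d(., B(xb, |x - xb|))^2 over a
   small ball would be interior and carry the subgradient 2 A (proj p - p), which points
   towards xb and violates that inequality.

   (ii) implies (i): if f x - f xb < \<theta> |x - xb|^2, a minimizer p of f + M |. - x|^2 over a
   ball around xb lies close to x and carries the subgradient 2 M (x - p); subregularity
   bounds |p - xb| by \<kappa> |2 M (x - p)|, and for M = 1/(4 \<kappa>), \<theta> = M/4 this is impossible. *)

lemma lsc_fun_eventually_greater:
  assumes "lsc_fun f" "a < f x"
  shows "eventually (\<lambda>y. a < f y) (nhds x)"
proof -
  have "f x \<le> Liminf (at x) f" using assms(1) lsc_fun_def by blast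
  then have "eventually (\<lambda>y. a < f y) (at x)" using assms(2) le_Liminf_iff by blast
  then show ?thesis using assms(2) eventually_nhds_conv_at by blast
qed

lemma lsc_fun_add_continuous:
  fixes f :: "'a::topological_space \<Rightarrow> ereal" and h :: "'a \<Rightarrow> real"
  assumes lsc: "lsc_fun f" and no_minf: "\<forall>x. f x \<noteq> -\<infinity>" and h: "continuous_on UNIV h"
  shows "lsc_fun (\<lambda>y. f y + ereal (h y))"
  unfolding lsc_fun_def
proof (intro allI iffD2[OF le_Liminf_iff] impI)
  fix x and a assume "a < f x + ereal (h x)"
  then obtain r where ar: "a < ereal r" and "ereal r < f x + ereal (h x)"
    using ereal_dense2 by blast
  then have "ereal (r - h x) < f x" using no_minf by (cases "f x") auto
  then obtain s where s: "r - h x < s" "ereal s < f x"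
    using ereal_dense2 by force
  have "(h \<longlongrightarrow> h x) (at x)"
    using h by (simp add: continuous_on_def)
  moreover have "r - s < h x" using s(1) by simp
  ultimately have "eventually (\<lambda>y. r - s < h y) (at x)"
    by (rule order_tendstoD(1))
  moreover have "eventually (\<lambda>y. ereal s < f y) (at x)"
    using lsc_fun_eventually_greater[OF lsc s(2)] eventually_nhds_conv_at by blast
  ultimately show "eventually (\<lambda>y. a < f y + ereal (h y)) (at x)"
  proof eventually_elim
    case (elim y)
    then have "ereal r < f y + ereal (h y)" using no_minf by (cases "f y") auto
    then show ?case by (rule order.strict_trans[OF ar])
  qed
qed

lemma lsc_fun_attains_min_on_compact:
  fixes g :: "'a::topological_space \<Rightarrow> ereal"
  assumes lsc: "lsc_fun g" and K: "compact K" "K \<noteq> {}"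
  shows "\<exists>p\<in>K. \<forall>y\<in>K. g p \<le> g y"
proof (rule ccontr)
  assume "\<not> ?thesis"
  then have "\<forall>p\<in>K. \<exists>y\<in>K. g y < g p" by (auto simp: not_le)
  then obtain n where n: "\<forall>p\<in>K. n p \<in> K \<and> g (n p) < g p" by metis
  have "\<forall>p\<in>K. \<exists>U. open U \<and> p \<in> U \<and> (\<forall>y\<in>U. g (n p) < g y)"
    using n lsc_fun_eventually_greater[OF lsc] by (simp add: eventually_nhds)
  then obtain U where U: "\<forall>p\<in>K. open (U p) \<and> p \<in> U p \<and> (\<forall>y\<in>U p. g (n p) < g y)"
    by metis
  obtain C where C: "C \<subseteq> K" "finite C" "K \<subseteq> (\<Union>c\<in>C. U c)"
    using compactE_image[OF K(1), of K U] U by blast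
  have "finite ((g \<circ> n) ` C)" "(g \<circ> n) ` C \<noteq> {}" using C K(2) by auto
  then have "Min ((g \<circ> n) ` C) \<in> (g \<circ> n) ` C" by (rule Min_in)
  then obtain p0 where p0: "p0 \<in> C" "g (n p0) = Min ((g \<circ> n) ` C)" by auto
  obtain p1 where p1: "p1 \<in> C" "n p0 \<in> U p1" using C n p0 by blast
  have "g (n p1) < g (n p0)" using U p1 C by auto
  moreover have "g (n p0) \<le> g (n p1)" using p0 p1 C by simp
  ultimately show False by simp
qed

lemma frechet_normal_subset_limiting_normal: "frechet_normal C z \<subseteq> limiting_normal C z"
proof
  fix v assume "v \<in> frechet_normal C z"
  then show "v \<in> limiting_normal C z"
    unfolding limiting_normal_def
    by (intro CollectI conjI exI[of _ "\<lambda>_. z"] exI[of _ "\<lambda>_. v"]) (auto simp: frechet_normal_def)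
qed

lemma frechet_normal_epigraph_of_quadratic_minorant:
  fixes f :: "'a::real_inner \<Rightarrow> ereal"
  assumes fp: "f p = ereal c" and \<rho>: "\<rho> > 0" and L: "L \<ge> 0"
    and minorant: "\<forall>y. dist y p < \<rho> \<longrightarrow> ereal (c + inner v (y - p) - L * (norm (y - p))\<^sup>2) \<le> f y"
  shows "(v, -1) \<in> frechet_normal (epigraph f) (p, c)"
  unfolding frechet_normal_def
proof (intro CollectI conjI allI impI)
  show "(p, c) \<in> epigraph f" using fp by (simp add: epigraph_def)
  fix \<epsilon> :: real assume "\<epsilon> > 0"
  define \<delta> where "\<delta> = min \<rho> (\<epsilon> / (L + 1))"
  show "\<exists>\<delta>>0. \<forall>z'\<in>epigraph f. norm (z' - (p, c)) < \<delta> \<longrightarrow>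
          inner (v, -1) (z' - (p, c)) \<le> \<epsilon> * norm (z' - (p, c))"
  proof (intro exI[of _ \<delta>] conjI ballI impI)
    show "\<delta> > 0" using \<open>\<epsilon> > 0\<close> \<rho> L by (simp add: \<delta>_def)
    fix z' assume z': "z' \<in> epigraph f" "norm (z' - (p, c)) < \<delta>"
    obtain y \<alpha> where z'_eq: "z' = (y, \<alpha>)" by (cases z')
    define N where "N = norm (z' - (p, c))"
    have y_close: "norm (y - p) \<le> N"
      using norm_fst_le[of "y - p" "\<alpha> - c"] by (simp add: N_def z'_eq)
    have "dist y p < \<rho>" using y_close z'(2) by (simp add: N_def \<delta>_def dist_norm)
    moreover have "f y \<le> ereal \<alpha>" using z'(1) by (simp add: z'_eq epigraph_def)
    ultimately have "ereal (c + inner v (y - p) - L * (norm (y - p))\<^sup>2) \<le> ereal \<alpha>"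
      using minorant order.trans by blast
    then have "inner (v, -1) (z' - (p, c)) \<le> L * (norm (y - p))\<^sup>2" by (simp add: z'_eq)
    also have "\<dots> \<le> L * N * N"
      using y_close L by (simp add: power2_eq_square mult.assoc mult_left_mono mult_mono')
    also have "\<dots> \<le> \<epsilon> * N"
    proof (rule mult_right_mono)
      have "N < \<epsilon> / (L + 1)" using z'(2) by (simp add: N_def \<delta>_def)
      then have "L * N + N < \<epsilon>" using L by (simp add: field_simps)
      moreover have "N \<ge> 0" by (simp add: N_def)
      ultimately show "L * N \<le> \<epsilon>" by linarith
    qed (simp add: N_def)
    finally show "inner (v, -1) (z' - (p, c)) \<le> \<epsilon> * norm (z' - (p, c))" by (simp add: N_def)
  qed
qed

lemma limiting_subdiff_of_quadratic_minorant:
  fixes f :: "'a::real_inner \<Rightarrow> ereal"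
  assumes "f p = ereal c" "\<rho> > 0" "L \<ge> 0"
    and "\<forall>y. dist y p < \<rho> \<longrightarrow> ereal (c + inner v (y - p) - L * (norm (y - p))\<^sup>2) \<le> f y"
  shows "v \<in> limiting_subdiff f p"
  using frechet_normal_epigraph_of_quadratic_minorant[OF assms]
    frechet_normal_subset_limiting_normal assms(1)
  unfolding limiting_subdiff_def by auto

lemma proximal_subdiff_quadratic_minorant:
  fixes f :: "'a::real_inner \<Rightarrow> ereal"
  assumes "v \<in> proximal_subdiff f x"
  obtains c \<rho> L where "f x = ereal c" "\<rho> > 0" "L \<ge> 0"
    "\<forall>y. dist y x < \<rho> \<longrightarrow> ereal (c + inner v (y - x) - L * (norm (y - x))\<^sup>2) \<le> f y"
proof -
  define Q where "Q y = (f y - f x - ereal (inner v (y - x))) / ereal ((norm (y - x))\<^sup>2)" for y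
  obtain c where c: "f x = ereal c" using assms by (cases "f x") (auto simp: proximal_subdiff_def)
  have "-\<infinity> < Liminf (at x) Q" using assms unfolding proximal_subdiff_def Q_def by blast
  then obtain z where "ereal z < Liminf (at x) Q" using ereal_dense2 by blast
  then have "eventually (\<lambda>y. ereal z < Q y) (at x)" using le_Liminf_iff by blast
  then obtain \<rho> where \<rho>: "\<rho> > 0" "\<forall>y. y \<noteq> x \<and> dist y x < \<rho> \<longrightarrow> ereal z < Q y"
    unfolding eventually_at by auto
  have "ereal (c + inner v (y - x) - \<bar>z\<bar> * (norm (y - x))\<^sup>2) \<le> f y" if y: "dist y x < \<rho>" for y
  proof (cases "y = x")
    case False
    define n2 where "n2 = (norm (y - x))\<^sup>2"
    have n2: "n2 > 0" using False by (simp add: n2_def)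
    have zQ: "ereal z < Q y" using \<rho> y False by blast
    show ?thesis
    proof (cases "f y")
      case (real a)
      then have "z * n2 < a - c - inner v (y - x)"
        using zQ c n2 by (simp add: Q_def n2_def[symmetric] pos_less_divide_eq)
      moreover have "- \<bar>z\<bar> * n2 \<le> z * n2" using n2 by (intro mult_right_mono) auto
      ultimately show ?thesis using real by (simp add: n2_def[symmetric])
    qed (use zQ n2 c in \<open>auto simp: Q_def n2_def[symmetric]\<close>)
  qed (simp add: c)
  then show thesis using that c \<rho>(1) by (metis abs_ge_zero)
qed

lemma proximal_subdiff_subset_limiting_subdiff:
  fixes f :: "'a::real_inner \<Rightarrow> ereal"
  shows "proximal_subdiff f x \<subseteq> limiting_subdiff f x"
proof
  fix v assume "v \<in> proximal_subdiff f x"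
  then obtain c \<rho> L where "f x = ereal c" "\<rho> > 0" "L \<ge> 0"
    "\<forall>y. dist y x < \<rho> \<longrightarrow> ereal (c + inner v (y - x) - L * (norm (y - x))\<^sup>2) \<le> f y"
    by (rule proximal_subdiff_quadratic_minorant)
  then show "v \<in> limiting_subdiff f x" by (rule limiting_subdiff_of_quadratic_minorant)
qed

lemma limiting_subdiff_at_perturbed_local_min:
  fixes f :: "'a::real_inner \<Rightarrow> ereal" and H :: "'a \<Rightarrow> real"
  assumes fp: "f p = ereal c" and \<rho>: "\<rho> > 0" and A: "A \<ge> 0"
    and local_min: "\<forall>y. dist y p < \<rho> \<longrightarrow> f p + ereal (H p) \<le> f y + ereal (H y)"
    and majorant: "\<forall>y. H y \<le> A * (norm (y - q))\<^sup>2" and touching: "H p = A * (norm (p - q))\<^sup>2"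
  shows "(2 * A) *\<^sub>R (q - p) \<in> limiting_subdiff f p"
proof (rule limiting_subdiff_of_quadratic_minorant[of f p c \<rho> A, OF fp \<rho> A], intro allI impI)
  fix y assume "dist y p < \<rho>"
  then have below: "ereal (c + H p - H y) \<le> f y"
    using local_min fp by (cases "f y") auto
  have "(norm (y - q))\<^sup>2 = (norm ((y - p) + (p - q)))\<^sup>2" by simp
  also have "\<dots> = (norm (y - p))\<^sup>2 + 2 * inner (y - p) (p - q) + (norm (p - q))\<^sup>2"
    by (simp only: power2_norm_eq_inner inner_add_left inner_add_right inner_commute[of "p - q" "y - p"])
  finally have expand: "(norm (y - q))\<^sup>2 = (norm (y - p))\<^sup>2 + 2 * inner (y - p) (p - q) + (norm (p - q))\<^sup>2" .
  have "inner ((2 * A) *\<^sub>R (q - p)) (y - p) = - (2 * A) * inner (y - p) (p - q)"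
    using inner_minus_left[of "p - q" "y - p"] by (simp add: inner_commute[of "y - p"])
  then have "c + inner ((2 * A) *\<^sub>R (q - p)) (y - p) - A * (norm (y - p))\<^sup>2
      = c + A * (norm (p - q))\<^sup>2 - A * (norm (y - q))\<^sup>2"
    unfolding expand by (simp add: algebra_simps)
  moreover have "\<dots> \<le> c + H p - H y" using majorant touching by simp
  ultimately show "ereal (c + inner ((2 * A) *\<^sub>R (q - p)) (y - p) - A * (norm (y - p))\<^sup>2) \<le> f y"
    using below by (metis ereal_less_eq(3) order_trans)
qed

lemma limiting_subdiff_at_min_on_cball:
  fixes f :: "'a::real_inner \<Rightarrow> ereal" and H :: "'a \<Rightarrow> real"
  assumes p: "p \<in> ball xb r" and fp: "f p = ereal c" and A: "A \<ge> 0"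
    and min: "\<forall>y\<in>cball xb r. f p + ereal (H p) \<le> f y + ereal (H y)"
    and "\<forall>y. H y \<le> A * (norm (y - q))\<^sup>2" "H p = A * (norm (p - q))\<^sup>2"
  shows "(2 * A) *\<^sub>R (q - p) \<in> limiting_subdiff f p"
proof (rule limiting_subdiff_at_perturbed_local_min[of f p c "r - dist xb p" A H q, OF fp _ A _ assms(5,6)])
  show "r - dist xb p > 0" using p by simp
  show "\<forall>y. dist y p < r - dist xb p \<longrightarrow> f p + ereal (H p) \<le> f y + ereal (H y)"
  proof (intro allI impI)
    fix y assume "dist y p < r - dist xb p"
    then have "y \<in> cball xb r" using dist_triangle[of xb y p] by (simp add: dist_commute)
    then show "f p + ereal (H p) \<le> f y + ereal (H y)" using min by blast
  qed
qed

lemma graphical_derivativeI: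
  assumes "\<And>k. yb + t k *\<^sub>R Z k \<in> F (xb + t k *\<^sub>R W k)" "\<And>k. t k > 0"
    and "t \<longlonglongrightarrow> 0" "W \<longlonglongrightarrow> w" "Z \<longlonglongrightarrow> z"
  shows "z \<in> graphical_derivative F xb yb w"
  unfolding graphical_derivative_def tangent_cone_def
proof (intro CollectI exI[of _ t] exI[of _ "\<lambda>k. (W k, Z k)"] conjI allI)
  fix k
  show "t k > 0" by (rule assms(2))
  show "(xb, yb) + t k *\<^sub>R (W k, Z k) \<in> graph_of F"
    using assms(1)[of k] by (simp add: graph_of_def)
qed (use assms(3-5) in \<open>auto intro: tendsto_Pair\<close>)

lemma graphical_derivative_nonpositive_direction:
  fixes F :: "'a::euclidean_space \<Rightarrow> 'a set"
  assumes V: "\<And>k. V k \<in> F (P k)" and P: "\<And>k. P k \<noteq> xb" "P \<longlonglongrightarrow> xb"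
    and bounded: "\<And>k. norm (V k) \<le> C * norm (P k - xb)"
    and e: "\<And>k. inner (V k) (P k - xb) \<le> e k * (norm (P k - xb))\<^sup>2" "e \<longlonglongrightarrow> 0"
  shows "\<exists>w z. w \<noteq> 0 \<and> z \<in> graphical_derivative F xb 0 w \<and> inner z w \<le> 0"
proof -
  define t where "t k = norm (P k - xb)" for k
  define W where "W k = (1 / t k) *\<^sub>R (P k - xb)" for k
  define Z where "Z k = (1 / t k) *\<^sub>R V k" for k
  have t_pos: "t k > 0" for k using P(1) by (simp add: t_def)
  have graph: "0 + t k *\<^sub>R Z k \<in> F (xb + t k *\<^sub>R W k)" for k
    using V[of k] t_pos[of k] by (simp add: W_def Z_def)
  have in_S: "\<forall>k. (W k, Z k) \<in> sphere 0 1 \<times> cball 0 C"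
  proof
    fix k
    have "norm (Z k) = norm (V k) / t k" using t_pos[of k] by (simp add: Z_def)
    also have "\<dots> \<le> C" using bounded[of k] t_pos[of k] by (simp add: t_def divide_le_eq mult.commute)
    finally show "(W k, Z k) \<in> sphere 0 1 \<times> cball 0 C"
      using t_pos[of k] by (simp add: W_def t_def)
  qed
  have "compact (sphere (0::'a) 1 \<times> cball (0::'a) C)"
    by (intro compact_Times compact_sphere compact_cball)
  then obtain l r where l: "l \<in> sphere 0 1 \<times> cball 0 C" "strict_mono r"
      "((\<lambda>k. (W k, Z k)) \<circ> r) \<longlonglongrightarrow> l"
    using seq_compactE[OF compact_imp_seq_compact in_S] by blast
  obtain w z where l_eq: "l = (w, z)" by (cases l)
  have W_lim: "(\<lambda>k. W (r k)) \<longlonglongrightarrow> w" and Z_lim: "(\<lambda>k. Z (r k)) \<longlonglongrightarrow> z"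
    using tendsto_fst[OF l(3)] tendsto_snd[OF l(3)] by (simp_all add: l_eq o_def)
  have "(\<lambda>k. norm (P k - xb)) \<longlonglongrightarrow> 0"
    using tendsto_norm[OF LIM_zero[OF P(2)]] by simp
  from LIMSEQ_subseq_LIMSEQ[OF this l(2)] have t_lim: "(\<lambda>k. t (r k)) \<longlonglongrightarrow> 0"
    by (simp add: o_def t_def)
  have z_deriv: "z \<in> graphical_derivative F xb 0 w"
  proof (rule graphical_derivativeI)
    show "0 + t (r k) *\<^sub>R Z (r k) \<in> F (xb + t (r k) *\<^sub>R W (r k))" for k by (rule graph)
    show "t (r k) > 0" for k by (rule t_pos)
  qed (fact t_lim W_lim Z_lim)+
  have quotient_le: "inner (Z k) (W k) \<le> e k" for k
  proof -
    have "inner (Z k) (W k) = inner (V k) (P k - xb) / (t k)\<^sup>2"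
      by (simp add: Z_def W_def power2_eq_square)
    also have "\<dots> \<le> e k" using e(1)[of k] t_pos[of k] by (simp add: t_def divide_le_eq)
    finally show ?thesis .
  qed
  have "(\<lambda>k. inner (Z (r k)) (W (r k))) \<longlonglongrightarrow> inner z w" by (intro tendsto_inner W_lim Z_lim)
  moreover have "(\<lambda>k. e (r k)) \<longlonglongrightarrow> 0" using LIMSEQ_subseq_LIMSEQ[OF e(2) l(2)] by (simp add: o_def)
  ultimately have "inner z w \<le> 0" by (rule LIMSEQ_le) (use quotient_le in auto)
  moreover have "w \<noteq> 0" using l(1) l_eq by auto
  ultimately show ?thesis using z_deriv by blast
qed

lemma posdef_graphical_derivative_local_bound:
  fixes F :: "'a::euclidean_space \<Rightarrow> 'a set"
  assumes posdef: "\<forall>w \<in> sv_dom (graphical_derivative F xb 0) - {0}.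
              \<forall>z \<in> graphical_derivative F xb 0 w. inner z w > 0"
  shows "\<exists>\<delta>>0. \<exists>\<eta>>0. \<forall>p v. v \<in> F p \<longrightarrow> 0 < norm (p - xb) \<longrightarrow> norm (p - xb) < \<delta>
           \<longrightarrow> norm v \<le> C * norm (p - xb) \<longrightarrow> inner v (p - xb) > \<eta> * (norm (p - xb))\<^sup>2"
proof (rule ccontr)
  define e :: "nat \<Rightarrow> real" where "e = (\<lambda>k. 1 / (real k + 1))"
  assume contra: "\<not> ?thesis"
  have "\<forall>k. \<exists>p v. v \<in> F p \<and> 0 < norm (p - xb) \<and> norm (p - xb) < e k
      \<and> norm v \<le> C * norm (p - xb) \<and> inner v (p - xb) \<le> e k * (norm (p - xb))\<^sup>2"
  proof
    fix k
    have "e k > 0" by (simp add: e_def)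
    then show "\<exists>p v. v \<in> F p \<and> 0 < norm (p - xb) \<and> norm (p - xb) < e k
      \<and> norm v \<le> C * norm (p - xb) \<and> inner v (p - xb) \<le> e k * (norm (p - xb))\<^sup>2"
      using contra by (meson not_less)
  qed
  then obtain P V where PV: "\<And>k. V k \<in> F (P k) \<and> 0 < norm (P k - xb) \<and> norm (P k - xb) < e k
      \<and> norm (V k) \<le> C * norm (P k - xb) \<and> inner (V k) (P k - xb) \<le> e k * (norm (P k - xb))\<^sup>2"
    by metis
  have e_lim: "e \<longlonglongrightarrow> 0"
    using LIMSEQ_inverse_real_of_nat by (simp add: e_def inverse_eq_divide add.commute)
  have "(\<lambda>k. norm (P k - xb)) \<longlonglongrightarrow> 0"
  proof (rule tendsto_sandwich[of "\<lambda>_. 0" _ _ e])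
    show "\<forall>\<^sub>F k in sequentially. norm (P k - xb) \<le> e k" using PV by (simp add: less_imp_le)
  qed (simp_all add: e_lim)
  then have P_lim: "P \<longlonglongrightarrow> xb" by (simp add: LIM_zero_iff tendsto_norm_zero_iff)
  have "\<exists>w z. w \<noteq> 0 \<and> z \<in> graphical_derivative F xb 0 w \<and> inner z w \<le> 0"
    by (rule graphical_derivative_nonpositive_direction[of V F P xb C e]) (use PV e_lim P_lim in auto)
  then obtain w z where w: "w \<noteq> 0" and z: "z \<in> graphical_derivative F xb 0 w" and "inner z w \<le> 0"
    by blast
  moreover have "w \<in> sv_dom (graphical_derivative F xb 0) - {0}" using w z by (auto simp: sv_dom_def)
  ultimately show False using posdef by fastforce
qed

lemma strongly_metrically_subregular_local_bound:
  fixes F :: "'a::metric_space \<Rightarrow> 'b::metric_space set"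
  assumes smr: "strongly_metrically_subregular F xb yb"
  obtains \<kappa> \<delta> where "\<kappa> > 0" "\<delta> > 0"
    "\<forall>x v. dist x xb < \<delta> \<longrightarrow> v \<in> F x \<longrightarrow> dist x xb \<le> \<kappa> * dist yb v"
proof -
  define S where "S = {u. yb \<in> F u}"
  have "metrically_subregular F xb yb" and "\<exists>\<epsilon>>0. S \<inter> ball xb \<epsilon> = {xb}"
    using smr by (simp_all add: strongly_metrically_subregular_def S_def)
  then obtain \<kappa> U \<epsilon> where \<kappa>: "\<kappa> > 0" and U: "open U" "xb \<in> U"
      "\<forall>x\<in>U. set_dist x S \<le> ereal \<kappa> * set_dist yb (F x)"
    and \<epsilon>: "\<epsilon> > 0" "S \<inter> ball xb \<epsilon> = {xb}"
    unfolding metrically_subregular_def S_def by blast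
  obtain \<rho> where \<rho>: "\<rho> > 0" "ball xb \<rho> \<subseteq> U" using U open_contains_ball by blast
  have "dist x xb \<le> \<kappa> * dist yb v" if x: "dist x xb < min \<rho> (\<epsilon> / 2)" and v: "v \<in> F x" for x v
  proof -
    have S_ne: "S \<noteq> {}" using \<epsilon>(2) by auto
    have "dist x xb \<le> dist x s" if "s \<in> S" for s
    proof (cases "s = xb")
      case False
      then have "s \<notin> ball xb \<epsilon>" using \<epsilon>(2) \<open>s \<in> S\<close> by blast
      then have "\<epsilon> \<le> dist xb s" by simp
      moreover have "dist xb s \<le> dist xb x + dist x s" by (rule dist_triangle)
      moreover have "dist xb x < \<epsilon> / 2" using x by (simp add: dist_commute)
      ultimately show ?thesis by (simp add: dist_commute)
    qed simp
    then have "dist x xb \<le> infdist x S"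
      unfolding infdist_notempty[OF S_ne] by (intro cINF_greatest S_ne)
    also have "infdist x S \<le> \<kappa> * infdist yb (F x)"
    proof -
      have "x \<in> U" using x \<rho>(2) by (auto simp: dist_commute)
      then have "set_dist x S \<le> ereal \<kappa> * set_dist yb (F x)" using U(3) by blast
      moreover have "F x \<noteq> {}" using v by blast
      ultimately show ?thesis using S_ne by (simp add: set_dist_def)
    qed
    also have "\<dots> \<le> \<kappa> * dist yb v" using \<kappa> infdist_le[OF v] by simp
    finally show ?thesis .
  qed
  moreover have "min \<rho> (\<epsilon> / 2) > 0" using \<rho>(1) \<epsilon>(1) by simp
  ultimately show thesis using that \<kappa> by blast
qed

lemma strongly_metrically_subregular_if_local_bound:
  fixes F :: "'a::metric_space \<Rightarrow> 'b::metric_space set"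
  assumes yb: "yb \<in> F xb" and \<kappa>: "\<kappa> > 0" and \<delta>: "\<delta> > 0"
    and bound: "\<forall>x v. dist x xb < \<delta> \<longrightarrow> v \<in> F x \<longrightarrow> dist x xb \<le> \<kappa> * dist yb v"
  shows "strongly_metrically_subregular F xb yb"
proof -
  have "set_dist x {u. yb \<in> F u} \<le> ereal \<kappa> * set_dist yb (F x)" if x: "x \<in> ball xb \<delta>" for x
  proof (cases "F x = {}")
    case True
    then show ?thesis using \<kappa> by (simp add: set_dist_def)
  next
    case False
    have "dist x xb / \<kappa> \<le> dist yb v" if "v \<in> F x" for v
    proof -
      have "dist x xb \<le> \<kappa> * dist yb v" using bound x that by (simp add: dist_commute)
      then show ?thesis using \<kappa> by (simp add: divide_le_eq mult.commute)
    qed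
    then have "dist x xb / \<kappa> \<le> infdist yb (F x)"
      unfolding infdist_notempty[OF False] by (intro cINF_greatest False)
    then have "dist x xb \<le> \<kappa> * infdist yb (F x)" using \<kappa> by (simp add: divide_le_eq mult.commute)
    moreover have "infdist x {u. yb \<in> F u} \<le> dist x xb" using yb by (intro infdist_le) simp
    ultimately show ?thesis using False yb by (auto simp: set_dist_def)
  qed
  then have "metrically_subregular F xb yb"
    unfolding metrically_subregular_def using yb \<kappa> \<delta>
    by (intro conjI exI[of _ \<kappa>] exI[of _ "ball xb \<delta>"]) auto
  moreover have "{u. yb \<in> F u} \<inter> ball xb \<delta> = {xb}"
  proof (intro equalityI subsetI)
    fix u assume "u \<in> {u. yb \<in> F u} \<inter> ball xb \<delta>"
    then have "dist u xb < \<delta>" "yb \<in> F u" by (simp_all add: dist_commute)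
    then have "dist u xb \<le> \<kappa> * dist yb yb" using bound by blast
    then show "u \<in> {xb}" by simp
  qed (use yb \<delta> in simp)
  ultimately show ?thesis
    unfolding strongly_metrically_subregular_def using \<delta> by blast
qed

lemma strongly_metrically_subregular_if_posdef_bound:
  fixes F :: "'a::real_inner \<Rightarrow> 'a set"
  assumes zero: "0 \<in> F xb" and \<delta>: "\<delta> > 0" and \<eta>: "\<eta> > 0" and C: "C \<ge> 1"
    and posdef: "\<forall>p v. v \<in> F p \<longrightarrow> 0 < norm (p - xb) \<longrightarrow> norm (p - xb) < \<delta>
           \<longrightarrow> norm v \<le> C * norm (p - xb) \<longrightarrow> inner v (p - xb) > \<eta> * (norm (p - xb))\<^sup>2"
  shows "strongly_metrically_subregular F xb 0"
proof -
  have "dist p xb \<le> (1 + 1 / \<eta>) * dist 0 v" if p: "dist p xb < \<delta>" and v: "v \<in> F p" for p v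
  proof -
    define n where "n = norm (p - xb)"
    have "n \<le> (1 + 1 / \<eta>) * norm v"
    proof (cases "n < norm v \<or> n = 0")
      case True
      then show ?thesis using \<eta> by (auto simp: n_def distrib_right intro: add_increasing2)
    next
      case False
      have "n \<le> C * n" using C by (simp add: n_def mult_le_cancel_right1)
      then have "norm v \<le> C * n" using False by linarith
      then have "\<eta> * n\<^sup>2 < inner v (p - xb)"
        using posdef v p False by (simp add: n_def dist_norm)
      also have "\<dots> \<le> norm v * n" using norm_cauchy_schwarz by (simp add: n_def)
      finally have "\<eta> * n < norm v" using False by (simp add: power2_eq_square n_def)
      then have "n \<le> norm v / \<eta>" using \<eta> by (simp add: pos_le_divide_eq mult.commute)
      moreover have "(1 + 1 / \<eta>) * norm v = norm v + norm v / \<eta>" by (simp add: distrib_right)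
      ultimately show ?thesis using norm_ge_zero[of v] by linarith
    qed
    then show ?thesis by (simp add: n_def dist_norm)
  qed
  moreover have "1 + 1 / \<eta> > 0" using \<eta> by (simp add: add_pos_pos)
  ultimately show ?thesis
    using strongly_metrically_subregular_if_local_bound[of 0 F xb "1 + 1 / \<eta>" \<delta>] zero \<delta> by blast
qed

lemma quadratic_growth_if_subdiff_error_bound:
  fixes f :: "'a::euclidean_space \<Rightarrow> ereal"
  assumes lsc: "lsc_fun f" and no_minf: "\<forall>x. f x \<noteq> -\<infinity>" and c: "f xb = ereal c"
    and local_min: "\<forall>x. dist x xb \<le> \<gamma> \<longrightarrow> ereal c \<le> f x" and \<kappa>: "\<kappa> > 0"
    and error_bound: "\<forall>p v. dist p xb < \<rho> \<longrightarrow> v \<in> limiting_subdiff f p \<longrightarrow> dist p xb \<le> \<kappa> * norm v"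
    and x: "4 * norm (x - xb) \<le> \<gamma>" "4 * norm (x - xb) \<le> \<rho>"
  shows "ereal ((norm (x - xb))\<^sup>2 / (16 * \<kappa>)) \<le> f x - f xb"
proof (rule ccontr)
  define M where "M = 1 / (4 * \<kappa>)"
  have M: "M > 0" "\<kappa> * (2 * M) = 1 / 2" using \<kappa> by (simp_all add: M_def)
  define t where "t = norm (x - xb)"
  assume "\<not> ?thesis"
  then have fx: "f x < ereal (c + M / 4 * t\<^sup>2)"
    using c \<kappa> by (cases "f x") (auto simp: t_def M_def algebra_simps)
  then have t_pos: "t > 0" using c by (cases "x = xb") (auto simp: t_def)
  define H where "H y = M * (norm (y - x))\<^sup>2" for y
  have "continuous_on UNIV H" unfolding H_def by (intro continuous_intros)
  moreover have "cball xb (2 * t) \<noteq> {}" using t_pos by simp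
  ultimately obtain p where p: "p \<in> cball xb (2 * t)"
      "\<forall>y\<in>cball xb (2 * t). f p + ereal (H p) \<le> f y + ereal (H y)"
    using lsc_fun_attains_min_on_compact[OF lsc_fun_add_continuous[OF lsc no_minf] compact_cball]
    by blast
  define s where "s = norm (p - x)"
  have s_nonneg: "s \<ge> 0" by (simp add: s_def)
  have "dist p xb \<le> 2 * t" using p(1) by (simp add: dist_commute)
  then have "dist p xb \<le> \<gamma>" using x(1) t_pos unfolding t_def by linarith
  then have "ereal c \<le> f p" using local_min by blast
  moreover have "f p + ereal (M * s\<^sup>2) < ereal (c + M / 4 * t\<^sup>2)"
    using p(2)[rule_format, of x] fx by (simp add: H_def s_def t_def dist_norm norm_minus_commute)
  ultimately obtain fp where fp: "f p = ereal fp" and "M * s\<^sup>2 < M / 4 * t\<^sup>2"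
    by (cases "f p") auto
  then have "(2 * s)\<^sup>2 < t\<^sup>2" using M(1) by (simp add: power_mult_distrib)
  then have s_small: "2 * s < t" by (rule power_less_imp_less_base) (use t_pos in simp)
  have p_close: "dist p xb \<le> t + s" and t_le: "t \<le> s + dist p xb"
    using dist_triangle[of p xb x] dist_triangle[of x xb p]
    by (simp_all add: s_def t_def dist_norm norm_minus_commute)
  have "p \<in> ball xb (2 * t)" using p_close s_small s_nonneg by (simp add: dist_commute)
  then have "(2 * M) *\<^sub>R (x - p) \<in> limiting_subdiff f p"
    by (rule limiting_subdiff_at_min_on_cball[of p xb "2 * t" f fp M H x, OF _ fp _ p(2)])
      (use M in \<open>auto simp: H_def\<close>)
  moreover have "dist p xb < \<rho>" using p_close s_small s_nonneg x(2) by (simp add: t_def)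
  ultimately have "dist p xb \<le> \<kappa> * norm ((2 * M) *\<^sub>R (x - p))" using error_bound by blast
  also have "\<dots> = s / 2" using M by (simp add: s_def norm_minus_commute)
  finally show False using t_le s_small s_nonneg by linarith
qed

lemma strong_local_minimizer_if_strongly_subregular:
  fixes f :: "'a::euclidean_space \<Rightarrow> ereal"
  assumes lsc: "lsc_fun f" and no_minf: "\<forall>x. f x \<noteq> -\<infinity>" and dom: "xb \<in> efdom f"
    and local_min: "local_minimizer f xb"
    and smr: "strongly_metrically_subregular (limiting_subdiff f) xb 0"
  shows "strong_local_minimizer f xb"
proof -
  obtain c where c: "f xb = ereal c" using dom no_minf by (cases "f xb") (auto simp: efdom_def)
  obtain \<gamma> where \<gamma>: "\<gamma> > 0" "\<forall>x. dist x xb \<le> \<gamma> \<longrightarrow> ereal c \<le> f x"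
    using local_min c unfolding local_minimizer_def by auto
  obtain \<kappa> \<rho> where \<kappa>: "\<kappa> > 0" and \<rho>: "\<rho> > 0"
    and "\<forall>p v. dist p xb < \<rho> \<longrightarrow> v \<in> limiting_subdiff f p \<longrightarrow> dist p xb \<le> \<kappa> * dist 0 v"
    by (rule strongly_metrically_subregular_local_bound[OF smr])
  then have error_bound:
    "\<forall>p v. dist p xb < \<rho> \<longrightarrow> v \<in> limiting_subdiff f p \<longrightarrow> dist p xb \<le> \<kappa> * norm v"
    by simp
  show ?thesis
    unfolding strong_local_minimizer_def
  proof (rule exI[of _ "1 / (8 * \<kappa>)"], intro conjI exI[of _ "min \<gamma> \<rho> / 4"] allI impI)
    fix x assume "norm (x - xb) \<le> min \<gamma> \<rho> / 4"
    then have "4 * norm (x - xb) \<le> \<gamma>" "4 * norm (x - xb) \<le> \<rho>" by simp_all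
    from quadratic_growth_if_subdiff_error_bound[OF lsc no_minf c \<gamma>(2) \<kappa> error_bound this]
    show "ereal (1 / (8 * \<kappa>) / 2 * (norm (x - xb))\<^sup>2) \<le> f x - f xb" by simp
  qed (use \<kappa> \<gamma>(1) \<rho> in auto)
qed

lemma radial_projection_cball:
  fixes p xb :: "'a::real_normed_vector"
  assumes "t \<ge> 0"
  obtains a where "0 \<le> a" "a \<le> 1" "norm (p - a *\<^sub>R (p - xb) - xb) \<le> t"
    "a * norm (p - xb) = max 0 (norm (p - xb) - t)"
proof (cases "norm (p - xb) \<le> t")
  case True
  then show thesis by (intro that[of 0]) auto
next
  case False
  define s where "s = norm (p - xb)"
  have s: "s > t" "s > 0" using False assms by (auto simp: s_def)
  have q: "p - (1 - t / s) *\<^sub>R (p - xb) - xb = (t / s) *\<^sub>R (p - xb)" by (simp add: algebra_simps)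
  show thesis
  proof (rule that[of "1 - t / s"])
    show "0 \<le> 1 - t / s" "1 - t / s \<le> 1" using s assms by simp_all
    show "norm (p - (1 - t / s) *\<^sub>R (p - xb) - xb) \<le> t" unfolding q using s assms by (simp add: s_def)
    show "(1 - t / s) * norm (p - xb) = max 0 (norm (p - xb) - t)" using s by (simp add: s_def field_simps)
  qed
qed

(* max 0 (norm (y - xb) - t) is the distance from y to cball xb t, and p - a *\<^sub>R (p - xb)
   below is the projection of p onto that ball. *)
lemma limiting_subdiff_at_min_plus_sqdist_to_cball:
  fixes f :: "'a::real_inner \<Rightarrow> ereal"
  assumes p: "p \<in> ball xb r" and fp: "f p = ereal c" and A: "A \<ge> 0" and t: "t \<ge> 0"
    and min: "\<forall>y\<in>cball xb r. f p + ereal (A * (max 0 (norm (p - xb) - t))\<^sup>2)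
                               \<le> f y + ereal (A * (max 0 (norm (y - xb) - t))\<^sup>2)"
  obtains a where "0 \<le> a" "a \<le> 1" "(- (2 * A * a)) *\<^sub>R (p - xb) \<in> limiting_subdiff f p"
proof -
  obtain a where a: "0 \<le> a" "a \<le> 1" "norm (p - a *\<^sub>R (p - xb) - xb) \<le> t"
      "a * norm (p - xb) = max 0 (norm (p - xb) - t)"
    using radial_projection_cball[OF t] by blast
  define q where "q = p - a *\<^sub>R (p - xb)"
  have "(2 * A) *\<^sub>R (q - p) \<in> limiting_subdiff f p"
  proof (rule limiting_subdiff_at_min_on_cball[of p xb r f c A "\<lambda>y. A * (max 0 (norm (y - xb) - t))\<^sup>2" q,
        OF p fp A min])
    show "\<forall>y. A * (max 0 (norm (y - xb) - t))\<^sup>2 \<le> A * (norm (y - q))\<^sup>2"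
    proof
      fix y
      have "norm (y - xb) \<le> norm (y - q) + norm (q - xb)"
        using norm_triangle_ineq[of "y - q" "q - xb"] by simp
      then have "max 0 (norm (y - xb) - t) \<le> norm (y - q)" using a(3) by (simp add: q_def)
      then show "A * (max 0 (norm (y - xb) - t))\<^sup>2 \<le> A * (norm (y - q))\<^sup>2"
        using A by (intro mult_left_mono power_mono) auto
    qed
    show "A * (max 0 (norm (p - xb) - t))\<^sup>2 = A * (norm (p - q))\<^sup>2"
      using a(1,4) by (simp add: q_def)
  qed
  moreover have "q - p = - a *\<^sub>R (p - xb)" by (simp add: q_def)
  ultimately show thesis using that a(1,2) by simp
qed

lemma center_below_if_no_descent_subgradients:
  fixes f :: "'a::euclidean_space \<Rightarrow> ereal"
  assumes lsc: "lsc_fun f" and no_minf: "\<forall>x. f x \<noteq> -\<infinity>" and c: "f xb = ereal c"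
    and L: "L \<ge> 0" and A: "A \<ge> 4 * L"
    and minorant: "\<forall>y. dist y xb < r0 \<longrightarrow> ereal (c - L * (norm (y - xb))\<^sup>2) \<le> f y"
    and no_descent: "\<forall>p v. v \<in> limiting_subdiff f p \<longrightarrow> 0 < norm (p - xb) \<longrightarrow> norm (p - xb) < \<delta>
           \<longrightarrow> norm v \<le> 2 * A * norm (p - xb) \<longrightarrow> inner v (p - xb) > 0"
    and x: "dist x xb \<le> min r0 \<delta> / 4"
  shows "f xb \<le> f x"
proof (rule ccontr)
  define r where "r = min r0 \<delta> / 2"
  define t where "t = norm (x - xb)"
  define H where "H y = A * (max 0 (norm (y - xb) - t))\<^sup>2" for y
  have A0: "A \<ge> 0" using A L by simp
  assume "\<not> f xb \<le> f x"
  then have fx: "f x < ereal c" using c by simp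
  then have t: "t > 0" "t \<le> r / 2" using c x by (auto simp: t_def r_def dist_norm)
  then have r: "r < r0" "r < \<delta>" by (auto simp: r_def)
  have "continuous_on UNIV H" unfolding H_def by (intro continuous_intros)
  moreover have "cball xb r \<noteq> {}" using t by simp
  ultimately obtain p where p: "p \<in> cball xb r"
      "\<forall>y\<in>cball xb r. f p + ereal (H p) \<le> f y + ereal (H y)"
    using lsc_fun_attains_min_on_compact[OF lsc_fun_add_continuous[OF lsc no_minf] compact_cball]
    by blast
  have "x \<in> cball xb r" using t by (simp add: dist_norm norm_minus_commute t_def[symmetric])
  then have "f p + ereal (H p) \<le> f x + ereal (H x)" using p(2) by blast
  moreover have "H x = 0" by (simp add: H_def t_def)
  ultimately have p_below: "f p + ereal (H p) < ereal c" using fx by simp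
  then obtain fp where fp: "f p = ereal fp" using no_minf by (cases "f p") auto
  define s where "s = norm (p - xb)"
  have "s < r"
  proof (rule ccontr)
    \<comment> \<open>on the sphere, minorant and penalty together already reach c\<close>
    assume "\<not> s < r"
    then have s_eq: "s = r" using p(1) by (simp add: s_def dist_norm norm_minus_commute)
    then have "c - L * r\<^sup>2 \<le> fp"
      using minorant[rule_format, of p] r(1) fp by (simp add: s_def dist_norm)
    moreover have "L * r\<^sup>2 \<le> A * (r / 2)\<^sup>2" using A t by (simp add: power2_eq_square mult_right_mono)
    moreover have "A * (r / 2)\<^sup>2 \<le> H p" using A0 t s_eq by (simp add: H_def s_def mult_left_mono)
    ultimately show False using p_below fp by simp
  qed
  have "s > 0" using p_below c t(1) by (cases "p = xb") (auto simp: s_def H_def)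
  have "p \<in> ball xb r" using \<open>s < r\<close> by (simp add: s_def dist_norm norm_minus_commute)
  then obtain a where a: "0 \<le> a" "a \<le> 1"
    and v: "(- (2 * A * a)) *\<^sub>R (p - xb) \<in> limiting_subdiff f p"
    using limiting_subdiff_at_min_plus_sqdist_to_cball[of p xb r f fp A t,
        OF _ fp A0 _ p(2)[unfolded H_def]] t(1)
    by auto
  have "2 * A * a \<le> 2 * A" using A0 a(2) by (simp add: mult_left_le)
  then have "norm ((- (2 * A * a)) *\<^sub>R (p - xb)) \<le> 2 * A * norm (p - xb)"
    using A0 a(1) by (simp add: mult_right_mono)
  moreover have "0 < norm (p - xb)" "norm (p - xb) < \<delta>"
    using \<open>s > 0\<close> \<open>s < r\<close> r(2) by (simp_all add: s_def)
  ultimately have "inner ((- (2 * A * a)) *\<^sub>R (p - xb)) (p - xb) > 0"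
    using no_descent v by blast
  moreover have "0 \<le> 2 * A * a * (inner (p - xb) (p - xb))" using A0 a(1) by simp
  ultimately show False by simp
qed

lemma local_minimizer_and_strongly_subregular_if_posdef:
  fixes f :: "'a::euclidean_space \<Rightarrow> ereal"
  assumes lsc: "lsc_fun f" and no_minf: "\<forall>x. f x \<noteq> -\<infinity>"
    and prox: "0 \<in> proximal_subdiff f xb"
    and posdef: "\<forall>w \<in> sv_dom (graphical_derivative (limiting_subdiff f) xb 0) - {0}.
              \<forall>z \<in> graphical_derivative (limiting_subdiff f) xb 0 w. inner z w > 0"
  shows "local_minimizer f xb \<and> strongly_metrically_subregular (limiting_subdiff f) xb 0"
proof
  obtain c r0 L where c: "f xb = ereal c" and r0: "r0 > 0" and L: "L \<ge> 0"
    and "\<forall>y. dist y xb < r0 \<longrightarrow> ereal (c + inner 0 (y - xb) - L * (norm (y - xb))\<^sup>2) \<le> f y"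
    by (rule proximal_subdiff_quadratic_minorant[OF prox])
  then have minorant: "\<forall>y. dist y xb < r0 \<longrightarrow> ereal (c - L * (norm (y - xb))\<^sup>2) \<le> f y"
    by simp
  define A where "A = 4 * L + 1"
  obtain \<delta> \<eta> where \<delta>: "\<delta> > 0" and \<eta>: "\<eta> > 0"
    and bound: "\<forall>p v. v \<in> limiting_subdiff f p \<longrightarrow> 0 < norm (p - xb) \<longrightarrow> norm (p - xb) < \<delta>
           \<longrightarrow> norm v \<le> 2 * A * norm (p - xb) \<longrightarrow> inner v (p - xb) > \<eta> * (norm (p - xb))\<^sup>2"
    using posdef_graphical_derivative_local_bound[OF posdef, of "2 * A"] by blast
  have no_descent: "\<forall>p v. v \<in> limiting_subdiff f p \<longrightarrow> 0 < norm (p - xb) \<longrightarrow> norm (p - xb) < \<delta>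
           \<longrightarrow> norm v \<le> 2 * A * norm (p - xb) \<longrightarrow> inner v (p - xb) > 0"
  proof (intro allI impI)
    fix p v assume "v \<in> limiting_subdiff f p" "0 < norm (p - xb)" "norm (p - xb) < \<delta>"
      "norm v \<le> 2 * A * norm (p - xb)"
    then have "\<eta> * (norm (p - xb))\<^sup>2 < inner v (p - xb)" using bound by blast
    moreover have "0 < \<eta> * (norm (p - xb))\<^sup>2" using \<eta> \<open>0 < norm (p - xb)\<close> by simp
    ultimately show "inner v (p - xb) > 0" by linarith
  qed
  have "A \<ge> 4 * L" by (simp add: A_def)
  note center_below = center_below_if_no_descent_subgradients[OF lsc no_minf c L this minorant no_descent]
  show "local_minimizer f xb"
    unfolding local_minimizer_def using center_below r0 \<delta>
    by (intro exI[of _ "min r0 \<delta> / 4"]) auto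
  show "strongly_metrically_subregular (limiting_subdiff f) xb 0"
  proof (rule strongly_metrically_subregular_if_posdef_bound[OF _ \<delta> \<eta> _ bound])
    show "0 \<in> limiting_subdiff f xb" using prox proximal_subdiff_subset_limiting_subdiff by blast
    show "1 \<le> 2 * A" using L by (simp add: A_def)
  qed
qed

theorem theorem3p3:
  fixes f :: "'a::euclidean_space \<Rightarrow> ereal" and xb :: 'a
  assumes "proper_fun f" and "lsc_fun f" and "xb \<in> efdom f"
  shows "((0 \<in> proximal_subdiff f xb \<and>
           (\<forall>w \<in> sv_dom (graphical_derivative (limiting_subdiff f) xb 0) - {0}.
              \<forall>z \<in> graphical_derivative (limiting_subdiff f) xb 0 w. inner z w > 0))
          \<longrightarrow> (local_minimizer f xb \<and> strongly_metrically_subregular (limiting_subdiff f) xb 0))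
       \<and> ((local_minimizer f xb \<and> strongly_metrically_subregular (limiting_subdiff f) xb 0)
          \<longrightarrow> strong_local_minimizer f xb)"
proof -
  have no_minf: "\<forall>x. f x \<noteq> -\<infinity>" using assms(1) by (simp add: proper_fun_def)
  show ?thesis
    using local_minimizer_and_strongly_subregular_if_posdef[OF assms(2) no_minf]
      strong_local_minimizer_if_strongly_subregular[OF assms(2) no_minf assms(3)]
    by blast
qed

end
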